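(* Let $b\ge 2$ be even and $n\ge 2$. Then $$g(SC^{+}(b,n)) = b + \frac{b^{2n}(b-1) + b^{n}(bn-n-1)}{2}.$$
   Context: For an even integer $b\ge2$ and $n\ge0$, $SC^{+}(b,n)=\langle\{b^{n+i}+1: i\in\mathbb{N}\}\rangle$ (submonoid of $(\mathbb{N},+)$ generated by these numbers, a numerical semigroup). The genus $g(S)$ is the cardinality of $\mathbb{N}\setminus S$. *)

theory Defs
  imports Complex_Main
begin

inductive_set submonoid_gen :: "nat set \<Rightarrow> nat set" for A :: "nat set" where
  zero: "0 \<in> submonoid_gen A"
| add: "a \<in> A \<Longrightarrow> s \<in> submonoid_gen A \<Longrightarrow> a + s \<in> submonoid_gen A"

definition SCplus :: "nat \<Rightarrow> nat \<Rightarrow> nat set" where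
  "SCplus b n = submonoid_gen {b ^ (n + i) + 1 | i. True}"

definition genus :: "nat set \<Rightarrow> nat" where
  "genus S = card (UNIV - S)"

end

theory Submission
  imports Defs "HOL-Number_Theory.Cong"
begin

text \<open>
  Every element of \<open>SC\<^sup>+(b,n)\<close> is a sum of \<open>k\<close> generators, i.e. \<open>b\<^sup>n A + k\<close> with \<open>A\<close> a sum of
  \<open>k\<close> powers of \<open>b\<close>; such \<open>A\<close> are exactly those with \<open>s(A) \<le> k \<le> A\<close> and \<open>k \<equiv> A (mod b - 1)\<close>,
  \<open>s\<close> the base-\<open>b\<close> digit sum. Writing \<open>A - k = (b - 1) e\<close>, the element equals
  \<open>m A - (b - 1) e\<close> with \<open>m = b\<^sup>n + 1\<close>. As \<open>b\<close> is even, \<open>b - 1\<close> is a unit modulo \<open>m\<close>, so the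
  residue class of an element determines \<open>e\<close> modulo \<open>m\<close>, and the least element of the class of
  \<open>e \<in> [0, b\<^sup>n]\<close> is \<open>w\<^sub>e = m A\<^sub>e - (b - 1) e\<close>, where \<open>A\<^sub>e\<close> is the least \<open>A\<close> with
  \<open>A - s(A) \<ge> (b - 1) e\<close>. Selmer's formula \<open>m g + m(m - 1)/2 = \<Sum> w\<^sub>e\<close> turns the genus into
  \<open>\<Sum> A\<^sub>e\<close>, which by double counting the pairs \<open>(A, e)\<close> with \<open>A - s(A) < (b - 1) e\<close> is a sum of
  digit sums below \<open>A\<^bsub>b\<^sup>n\<^esub> = (b - 1) b\<^sup>n + b\<close>.
\<close>

section \<open>Digit sums\<close>

lemma cong_power_1_mod_pred:
  fixes b :: nat
  assumes "b > 0"
  shows "[b ^ i = 1] (mod (b - 1))"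
proof -
  have "[b = 1] (mod (b - 1))"
    using cong_altdef_nat[of 1 b "b - 1"] assms by simp
  then show ?thesis
    using cong_pow by fastforce
qed

fun digit_sum :: "nat \<Rightarrow> nat \<Rightarrow> nat" where
  "digit_sum b x = (if x = 0 \<or> b < 2 then 0 else x mod b + digit_sum b (x div b))"

declare digit_sum.simps [simp del]

lemma digit_sum_0 [simp]: "digit_sum b 0 = 0"
  by (simp add: digit_sum.simps)

lemma digit_sum_mult_add:
  assumes "b \<ge> 2" "r < b"
  shows "digit_sum b (b * q + r) = digit_sum b q + r"
  using assms by (cases "b * q + r = 0") (auto simp: digit_sum.simps[of b "b * q + r"])

lemma digit_sum_div_mod: "b \<ge> 2 \<Longrightarrow> digit_sum b x = digit_sum b (x div b) + x mod b"
  using digit_sum_mult_add[of b "x mod b" "x div b"] by simp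

lemma digit_sum_less: "b \<ge> 2 \<Longrightarrow> x < b \<Longrightarrow> digit_sum b x = x"
  using digit_sum_mult_add[of b x 0] by simp

lemma digit_sum_mult: "b \<ge> 2 \<Longrightarrow> digit_sum b (b * q) = digit_sum b q"
  using digit_sum_mult_add[of b 0 q] by simp

lemma digit_sum_power_mult: "b \<ge> 2 \<Longrightarrow> digit_sum b (b ^ j * c) = digit_sum b c"
  by (induction j) (simp_all add: mult.assoc digit_sum_mult)

lemma digit_sum_le: "b \<ge> 2 \<Longrightarrow> digit_sum b x \<le> x"
proof (induction x rule: less_induct)
  case (less x)
  show ?case
  proof (cases "x = 0")
    case False
    have "digit_sum b x = digit_sum b (x div b) + x mod b"
      by (rule digit_sum_div_mod[OF less.prems])
    also have "\<dots> \<le> x div b + x mod b"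
      using less.IH[OF _ less.prems, of "x div b"] False less.prems by simp
    also have "\<dots> \<le> b * (x div b) + x mod b"
      using less.prems by (intro add_le_mono1) simp
    also have "\<dots> = x"
      by (rule mult_div_mod_eq)
    finally show ?thesis .
  qed simp
qed

lemma digit_sum_Suc_le: "b \<ge> 2 \<Longrightarrow> digit_sum b (Suc x) \<le> Suc (digit_sum b x)"
proof (induction x rule: less_induct)
  case (less x)
  note b = less.prems
  define q r where "q = x div b" and "r = x mod b"
  have x: "x = b * q + r" and "r < b"
    using b by (auto simp: q_def r_def)
  show ?case
  proof (cases "Suc r < b")
    case True
    then show ?thesis
      using digit_sum_mult_add[OF b] \<open>r < b\<close> x by (metis add_Suc_right le_refl)
  next
    case False
    then have "r = b - 1" and "Suc x = b * Suc q"
      using \<open>r < b\<close> x b by (auto simp: algebra_simps)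
    moreover have "q < x"
      using x b \<open>r = b - 1\<close> mult_le_mono1[of 1 b q] by linarith
    ultimately have "digit_sum b (Suc x) \<le> Suc (digit_sum b q)"
      using less.IH[OF _ b] digit_sum_mult[OF b] by metis
    then show ?thesis
      using digit_sum_mult_add[OF b \<open>r < b\<close>] x by simp
  qed
qed

lemma digit_sum_add_power_le: "b \<ge> 2 \<Longrightarrow> digit_sum b (x + b ^ i) \<le> Suc (digit_sum b x)"
proof (induction i arbitrary: x)
  case 0
  then show ?case
    using digit_sum_Suc_le by simp
next
  case (Suc i)
  have r: "x mod b < b"
    using Suc.prems by simp
  have "x + b ^ Suc i = b * (x div b + b ^ i) + x mod b"
    by (simp add: algebra_simps)
  then have "digit_sum b (x + b ^ Suc i) = digit_sum b (x div b + b ^ i) + x mod b"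
    using digit_sum_mult_add[OF Suc.prems r] by simp
  also have "\<dots> \<le> Suc (digit_sum b (x div b) + x mod b)"
    using Suc by simp
  also have "digit_sum b (x div b) + x mod b = digit_sum b x"
    using digit_sum_div_mod[OF Suc.prems, of x] by simp
  finally show ?case .
qed

lemma cong_digit_sum: "b \<ge> 2 \<Longrightarrow> [digit_sum b x = x] (mod (b - 1))"
proof (induction x rule: less_induct)
  case (less x)
  note b = less.prems
  show ?case
  proof (cases "x = 0")
    case False
    have "[digit_sum b (x div b) = x div b] (mod (b - 1))"
      using less.IH[OF _ b] False b by simp
    also have "[x div b = b * (x div b)] (mod (b - 1))"
      using cong_sym[OF cong_scalar_right[OF cong_power_1_mod_pred[of b 1], of "x div b"]] b
      by simp
    finally have "[digit_sum b (x div b) + x mod b = b * (x div b) + x mod b] (mod (b - 1))"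
      by (rule cong_add) (rule cong_refl)
    then show ?thesis
      using digit_sum_div_mod[OF b, of x] by simp
  qed simp
qed

lemma mono_diff_digit_sum:
  assumes "b \<ge> 2"
  shows "mono (\<lambda>x. x - digit_sum b x)"
  unfolding mono_iff_le_Suc
proof
  fix x
  show "x - digit_sum b x \<le> Suc x - digit_sum b (Suc x)"
    using digit_sum_Suc_le[OF assms, of x] by linarith
qed

lemma double_sum_lessThan: "2 * (\<Sum>i<n. i) = n * (n - 1)" for n :: nat
proof (induction n)
  case (Suc n)
  then show ?case
    by (cases n) (simp_all add: algebra_simps)
qed simp

lemma sum_lessThan_add: "(\<Sum>x<a + c. f x) = (\<Sum>x<a. f x) + (\<Sum>r<c. f (a + r))" for a c :: nat
  by (induction c) (simp_all add: add.assoc)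

lemma sum_digit_sum_mult:
  assumes "b \<ge> 2"
  shows "(\<Sum>x<b * y. digit_sum b x) = b * (\<Sum>q<y. digit_sum b q) + y * (\<Sum>r<b. r)"
proof (induction y)
  case (Suc y)
  have "(\<Sum>x<b * Suc y. digit_sum b x) = (\<Sum>x<b * y. digit_sum b x) + (\<Sum>r<b. digit_sum b (b * y + r))"
    using sum_lessThan_add[of "digit_sum b" "b * y" b] by (simp add: add.commute)
  also have "(\<Sum>r<b. digit_sum b (b * y + r)) = b * digit_sum b y + (\<Sum>r<b. r)"
    using digit_sum_mult_add[OF assms] by (simp add: sum.distrib)
  finally show ?case
    using Suc by (simp add: algebra_simps)
qed simp

lemma double_sum_digit_sum_mult_power:
  assumes "b \<ge> 2" "c \<le> b"
  shows "2 * (\<Sum>x<c * b ^ k. digit_sum b x) = b ^ k * c * (c - 1) + k * c * (b - 1) * b ^ k"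
proof (induction k)
  case 0
  have "(\<Sum>x<c. digit_sum b x) = (\<Sum>x<c. x)"
    using assms by (intro sum.cong) (auto simp: digit_sum_less)
  then show ?case
    by (simp add: double_sum_lessThan)
next
  case (Suc k)
  \<comment> \<open>naming the truncated differences keeps \<open>algebra_simps\<close> from distributing over them\<close>
  obtain c' b' where c': "c - 1 = c'" and b': "b - 1 = b'"
    by simp
  have "2 * (\<Sum>x<c * b ^ Suc k. digit_sum b x)
      = b * (2 * (\<Sum>x<c * b ^ k. digit_sum b x)) + c * b ^ k * (2 * (\<Sum>r<b. r))"
    using sum_digit_sum_mult[OF assms(1), of "c * b ^ k"] by (simp add: algebra_simps)
  then show ?case
    unfolding Suc double_sum_lessThan c' b' by (simp add: algebra_simps)
qed

section \<open>Membership in \<open>SC\<^sup>+(b,n)\<close>\<close>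

lemma submonoid_gen_add:
  "x \<in> submonoid_gen G \<Longrightarrow> y \<in> submonoid_gen G \<Longrightarrow> x + y \<in> submonoid_gen G"
  by (induction x rule: submonoid_gen.induct) (auto simp: add.assoc intro: submonoid_gen.add)

lemma submonoid_gen_mult: "a \<in> G \<Longrightarrow> c * a \<in> submonoid_gen G"
  by (induction c) (auto intro: submonoid_gen.intros)

lemma submonoid_gen_mono:
  assumes "G \<subseteq> H"
  shows "submonoid_gen G \<subseteq> submonoid_gen H"
proof
  fix x assume "x \<in> submonoid_gen G"
  then show "x \<in> submonoid_gen H"
    by (induction x rule: submonoid_gen.induct) (use assms in \<open>auto intro: submonoid_gen.intros\<close>)
qed

lemma SCplus_add: "x \<in> SCplus b n \<Longrightarrow> y \<in> SCplus b n \<Longrightarrow> x + y \<in> SCplus b n"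
  unfolding SCplus_def by (rule submonoid_gen_add)

lemma mult_generator_in_SCplus: "c * (b ^ (n + i) + 1) \<in> SCplus b n"
  unfolding SCplus_def by (rule submonoid_gen_mult) blast

lemma SCplus_Suc_subset: "SCplus b (Suc n) \<subseteq> SCplus b n"
  unfolding SCplus_def
proof (rule submonoid_gen_mono, clarify)
  fix i
  show "\<exists>j. b ^ (Suc n + i) + 1 = b ^ (n + j) + 1 \<and> True"
    by (rule exI[of _ "Suc i"]) simp
qed

lemma SCplus_decomp:
  assumes "x \<in> SCplus b n" "b \<ge> 2"
  shows "\<exists>A k. x = b ^ n * A + k \<and> digit_sum b A \<le> k \<and> k \<le> A \<and> [k = A] (mod (b - 1))"
  using assms(1) unfolding SCplus_def
proof (induction x rule: submonoid_gen.induct)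
  case zero
  show ?case
    by auto
next
  case (add a x)
  obtain i where a: "a = b ^ (n + i) + 1"
    using add.hyps by blast
  obtain A k where x: "x = b ^ n * A + k" and A: "digit_sum b A \<le> k" "k \<le> A" "[k = A] (mod (b - 1))"
    using add.IH by blast
  have "a + x = b ^ n * (A + b ^ i) + Suc k"
    using a x by (simp add: power_add algebra_simps)
  moreover have "digit_sum b (A + b ^ i) \<le> Suc k"
    using digit_sum_add_power_le[OF assms(2), of A i] A by simp
  moreover have "Suc k \<le> A + b ^ i"
    using A(2) zero_less_power[of b i] assms(2) by linarith
  moreover have "[k + 1 = A + b ^ i] (mod (b - 1))"
    using cong_add[OF A(3) cong_sym[OF cong_power_1_mod_pred]] assms(2) by simp
  ultimately show ?case
    by (intro exI[of _ "A + b ^ i"] exI[of _ "Suc k"]) simp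
qed

text \<open>
  The converse peels off the last base-\<open>b\<close> digit of \<open>A\<close>, which moves the remaining part into
  \<open>SCplus b (Suc n)\<close>; hence the induction on \<open>A\<close> is generalised over \<open>n\<close>.
\<close>

lemma SCplus_of_decomp:
  assumes "b \<ge> 2" "digit_sum b A \<le> k" "k \<le> A" "[k = A] (mod (b - 1))"
  shows "b ^ n * A + k \<in> SCplus b n"
  using assms(2-)
proof (induction A arbitrary: n k rule: less_induct)
  case (less A)
  show ?case
  proof (cases "A = 0")
    case True
    then show ?thesis
      using less.prems mult_generator_in_SCplus[of 0 b n 0] by simp
  next
    case False
    define q r where "q = A div b" and "r = A mod b"
    have A: "A = b * q + r" and "r < b"
      using assms(1) by (auto simp: q_def r_def)
    have ds: "digit_sum b A = digit_sum b q + r"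
      using digit_sum_mult_add[OF assms(1) \<open>r < b\<close>] A by simp
    show ?thesis
    proof (cases "k < q + r")
      case True
      \<comment> \<open>split off \<open>r\<close> copies of \<open>b ^ n + 1\<close> and recurse on \<open>q\<close> with exponent \<open>n + 1\<close>\<close>
      have "q < A"
        using False assms(1) by (simp add: q_def)
      moreover have "r \<le> k" "digit_sum b q \<le> k - r" "k - r \<le> q"
        using ds less.prems True by auto
      moreover have "[k - r = q] (mod (b - 1))"
      proof -
        have "[b * q = q] (mod (b - 1))"
          using cong_scalar_right[OF cong_power_1_mod_pred[of b 1], of q] assms(1) by simp
        then have "[A = q + r] (mod (b - 1))"
          using cong_add[OF _ cong_refl[of r]] A by simp
        then have "[k - r + r = q + r] (mod (b - 1))"
          using cong_trans[OF less.prems(3)] \<open>r \<le> k\<close> by simp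
        then show ?thesis
          by (simp only: cong_add_rcancel_nat)
      qed
      ultimately have "b ^ Suc n * q + (k - r) \<in> SCplus b n"
        using less.IH SCplus_Suc_subset by blast
      moreover have "b ^ n * A + k = r * (b ^ (n + 0) + 1) + (b ^ Suc n * q + (k - r))"
        using A ds less.prems by (simp add: algebra_simps)
      ultimately show ?thesis
        by (simp only:) (rule SCplus_add[OF mult_generator_in_SCplus])
    next
      case False
      obtain q' where q': "A - k = (b - 1) * q'"
        using less.prems by (metis cong_altdef_nat cong_sym dvdE)
      \<comment> \<open>now \<open>A - k \<le> (b - 1) * q\<close>, so \<open>A = (k - q') + b * q'\<close> with \<open>q' \<le> k\<close>\<close>
      have "(b - 1) * q' \<le> (b - 1) * q"
        using False A q' assms(1) by (simp add: algebra_simps diff_mult_distrib)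
      then have "q' \<le> k"
        using False assms(1) by simp
      moreover have "b ^ n * A + k = (k - q') * (b ^ (n + 0) + 1) + q' * (b ^ (n + 1) + 1)"
      proof -
        obtain c where c: "k = q' + c"
          using \<open>q' \<le> k\<close> le_Suc_ex by blast
        have "(b - 1) * q' + q' = b * q'"
          using assms(1) by (simp add: diff_mult_distrib)
        then have "A = c + b * q'"
          using q' less.prems(2) c by simp
        then show ?thesis
          by (simp add: c algebra_simps)
      qed
      ultimately show ?thesis
        by (simp only:) (rule SCplus_add[OF mult_generator_in_SCplus mult_generator_in_SCplus])
    qed
  qed
qed

section \<open>Apery sets and the genus\<close>

lemma card_cong_less: "card {y. [y = w] (mod m) \<and> y < w} = w div m" for w m :: nat
proof (cases "m = 0")
  case False
  define r q where "r = w mod m" and "q = w div m"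
  have w: "w = r + m * q" and "r < m"
    using False by (simp_all add: r_def q_def)
  have "{y. [y = w] (mod m) \<and> y < w} = (\<lambda>j. r + m * j) ` {..<q}"
  proof (intro set_eqI iffI)
    fix y assume "y \<in> {y. [y = w] (mod m) \<and> y < w}"
    then have "y mod m = r" "y < r + m * q"
      using w \<open>r < m\<close> by (auto simp: cong_def)
    moreover have y: "y = y mod m + m * (y div m)"
      by simp
    ultimately have "y div m < q"
      by (metis add_less_cancel_left mult_less_cancel1)
    then show "y \<in> (\<lambda>j. r + m * j) ` {..<q}"
      using y \<open>y mod m = r\<close> by auto
  next
    fix y assume "y \<in> (\<lambda>j. r + m * j) ` {..<q}"
    then obtain j where "j < q" "y = r + m * j"
      by blast
    then show "y \<in> {y. [y = w] (mod m) \<and> y < w}"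
      using w \<open>r < m\<close> by (auto simp: cong_def)
  qed
  moreover have "inj_on (\<lambda>j. r + m * j) {..<q}"
    using False by (auto intro: inj_onI)
  ultimately show ?thesis
    by (simp add: card_image q_def)
qed (simp add: cong_def)

context
  fixes S :: "nat set" and m :: nat and I :: "'a set" and w :: "'a \<Rightarrow> nat"
  assumes m: "m > 0"
    and bij: "bij_betw (\<lambda>i. w i mod m) I {..<m}"
    and apery_in: "\<And>i. i \<in> I \<Longrightarrow> w i \<in> S"
    and apery_least: "\<And>i x. i \<in> I \<Longrightarrow> x \<in> S \<Longrightarrow> [x = w i] (mod m) \<Longrightarrow> w i \<le> x"
    and add_closed: "\<And>x. x \<in> S \<Longrightarrow> x + m \<in> S"
begin

lemma gaps_eq_UN_Apery: "UNIV - S = (\<Union>i\<in>I. {y. [y = w i] (mod m) \<and> y < w i})"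
proof (intro set_eqI iffI)
  fix y assume "y \<in> UNIV - S"
  have "y mod m \<in> (\<lambda>i. w i mod m) ` I"
    using bij m by (simp add: bij_betw_def)
  then obtain i where i: "i \<in> I" "w i mod m = y mod m"
    by auto
  have "\<not> w i \<le> y"
  proof
    assume "w i \<le> y"
    then obtain j where "y = w i + m * j"
      using i(2) by (metis mod_eq_dvd_iff_nat dvdE le_add_diff_inverse)
    moreover have "w i + m * j \<in> S" for j
    proof (induction j)
      case (Suc j)
      then show ?case
        using add_closed[OF Suc] by (simp add: algebra_simps)
    qed (simp add: apery_in \<open>i \<in> I\<close>)
    ultimately show False
      using \<open>y \<in> UNIV - S\<close> by simp
  qed
  then show "y \<in> (\<Union>i\<in>I. {y. [y = w i] (mod m) \<and> y < w i})"
    using i by (auto simp: cong_def not_le intro!: bexI[of _ i])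
next
  fix y assume "y \<in> (\<Union>i\<in>I. {y. [y = w i] (mod m) \<and> y < w i})"
  then show "y \<in> UNIV - S"
    using apery_least by fastforce
qed

lemma card_gaps_Apery: "m * card (UNIV - S) + (\<Sum>r<m. r) = (\<Sum>i\<in>I. w i)"
proof -
  have "finite I"
    using bij bij_betw_finite by blast
  have "card (UNIV - S) = (\<Sum>i\<in>I. card {y. [y = w i] (mod m) \<and> y < w i})"
    unfolding gaps_eq_UN_Apery using \<open>finite I\<close> bij
    by (intro card_UN_disjoint) (auto simp: cong_def bij_betw_def inj_on_def)
  then have "m * card (UNIV - S) = (\<Sum>i\<in>I. m * (w i div m))"
    by (simp add: card_cong_less sum_distrib_left)
  moreover have "(\<Sum>r<m. r) = (\<Sum>i\<in>I. w i mod m)"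
    using sum.reindex_bij_betw[OF bij, of "\<lambda>r. r"] by simp
  ultimately show ?thesis
    by (simp flip: sum.distrib)
qed

end

section \<open>The Apery set of \<open>SC\<^sup>+(b,n)\<close> with respect to \<open>b ^ n + 1\<close>\<close>

text \<open>
  An element \<open>b ^ n * A + k\<close> with \<open>A - k = (b - 1) * e\<close> equals \<open>(b ^ n + 1) * A - (b - 1) * e\<close>;
  for fixed \<open>e\<close> the least one uses the least admissible \<open>A\<close>, namely \<open>apery_coeff b e\<close>.
\<close>

definition apery_coeff :: "nat \<Rightarrow> nat \<Rightarrow> nat" where
  "apery_coeff b e = (LEAST A. (b - 1) * e \<le> A - digit_sum b A)"

definition SC_apery :: "nat \<Rightarrow> nat \<Rightarrow> nat \<Rightarrow> nat" where
  "SC_apery b n e = (b ^ n + 1) * apery_coeff b e - (b - 1) * e"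

lemma apery_coeff_le: "(b - 1) * e \<le> A - digit_sum b A \<Longrightarrow> apery_coeff b e \<le> A"
  unfolding apery_coeff_def by (rule Least_le)

lemma diff_digit_sum_mult_ge: "b \<ge> 2 \<Longrightarrow> (b - 1) * e \<le> b * e - digit_sum b (b * e)"
  using digit_sum_mult[of b e] digit_sum_le[of b e] by (simp add: diff_mult_distrib)

lemma apery_coeff_spec:
  "b \<ge> 2 \<Longrightarrow> (b - 1) * e \<le> apery_coeff b e - digit_sum b (apery_coeff b e)"
  unfolding apery_coeff_def by (rule LeastI) (rule diff_digit_sum_mult_ge)

lemma apery_coeff_le_mult: "b \<ge> 2 \<Longrightarrow> apery_coeff b e \<le> b * e"
  by (intro apery_coeff_le diff_digit_sum_mult_ge)

lemma apery_coeff_mono: "b \<ge> 2 \<Longrightarrow> e \<le> e' \<Longrightarrow> apery_coeff b e \<le> apery_coeff b e'"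
  using apery_coeff_spec[of b e'] by (intro apery_coeff_le) (meson le_trans mult_le_mono2)

lemma less_apery_coeff_iff:
  assumes "b \<ge> 2"
  shows "A < apery_coeff b e \<longleftrightarrow> A - digit_sum b A < (b - 1) * e"
proof
  assume "A < apery_coeff b e"
  then show "A - digit_sum b A < (b - 1) * e"
    using apery_coeff_le not_le by blast
next
  assume "A - digit_sum b A < (b - 1) * e"
  moreover have "apery_coeff b e \<le> A \<Longrightarrow>
      apery_coeff b e - digit_sum b (apery_coeff b e) \<le> A - digit_sum b A"
    by (drule monoD[OF mono_diff_digit_sum[OF assms]]) simp
  ultimately show "A < apery_coeff b e"
    using apery_coeff_spec[OF assms, of e] by linarith
qed

lemma SC_apery_add:
  assumes "b \<ge> 2"
  shows "SC_apery b n e + (b - 1) * e = (b ^ n + 1) * apery_coeff b e"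
proof -
  have "(b - 1) * e \<le> apery_coeff b e"
    using apery_coeff_spec[OF assms, of e] by linarith
  also have "\<dots> \<le> (b ^ n + 1) * apery_coeff b e"
    by simp
  finally show ?thesis
    unfolding SC_apery_def by simp
qed

lemma SC_apery_in_SCplus:
  assumes "b \<ge> 2"
  shows "SC_apery b n e \<in> SCplus b n"
proof -
  define A where "A = apery_coeff b e"
  have A: "(b - 1) * e + digit_sum b A \<le> A"
    using apery_coeff_spec[OF assms, of e] digit_sum_le[OF assms, of A] by (simp add: A_def)
  have "[A - (b - 1) * e = A - (b - 1) * e + (b - 1) * e] (mod (b - 1))"
    by (simp add: cong_def)
  with A have "b ^ n * A + (A - (b - 1) * e) \<in> SCplus b n"
    by (intro SCplus_of_decomp[OF assms]) auto
  moreover have "b ^ n * A + (A - (b - 1) * e) = SC_apery b n e"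
    using A by (simp add: SC_apery_def A_def algebra_simps)
  ultimately show ?thesis
    by simp
qed

lemma coprime_pred_power_plus_1:
  fixes b :: nat
  assumes "even b" "b > 0"
  shows "coprime (b - 1) (b ^ n + 1)"
proof -
  have "[b ^ n + 1 = 2] (mod (b - 1))"
    using cong_add[OF cong_power_1_mod_pred[OF assms(2), of n] cong_refl[of "1::nat"]]
    by (simp add: numeral_2_eq_2)
  then have "gcd (b ^ n + 1) (b - 1) = gcd 2 (b - 1)"
    by (rule cong_gcd_eq)
  moreover have "coprime 2 (b - 1)"
    using assms by simp
  ultimately show ?thesis
    by (simp add: coprime_iff_gcd_eq_1 gcd.commute)
qed

lemma cong_shape_imp_cong:
  fixes b x y e e' A A' :: nat
  assumes "even b" "b \<ge> 2"
    and "x + (b - 1) * e = (b ^ n + 1) * A" "y + (b - 1) * e' = (b ^ n + 1) * A'"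
    and "[x = y] (mod (b ^ n + 1))"
  shows "[e = e'] (mod (b ^ n + 1))"
proof -
  have "[x + (b - 1) * e = y + (b - 1) * e'] (mod (b ^ n + 1))"
    unfolding assms(3,4) cong_def by (simp only: mod_mult_self1_is_0)
  then have "[x + (b - 1) * e = x + (b - 1) * e'] (mod (b ^ n + 1))"
    using cong_add[OF cong_sym[OF assms(5)] cong_refl] cong_trans by blast
  then show ?thesis
    using coprime_pred_power_plus_1[of b n] assms(1,2)
    by (simp add: cong_add_lcancel_nat cong_mult_lcancel_nat)
qed

lemma SC_apery_cong_imp_eq:
  assumes "even b" "b \<ge> 2" "e \<le> b ^ n" "e' \<le> b ^ n"
    and "[SC_apery b n e = SC_apery b n e'] (mod (b ^ n + 1))"
  shows "e = e'"
  using cong_shape_imp_cong[OF assms(1,2) SC_apery_add SC_apery_add assms(5)] assms(2-4)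
  by (simp add: cong_def le_imp_less_Suc)

lemma SC_apery_le_power_mult:
  assumes "b \<ge> 2" "e \<le> b ^ n" "e + (b ^ n + 1) \<le> e'"
  shows "SC_apery b n e \<le> b ^ n * ((b - 1) * e')"
proof -
  obtain c where c: "b = Suc c" "c \<ge> 1"
    using assms(1) by (metis Suc_le_D Suc_le_mono one_add_one plus_1_eq_Suc)
  define N where "N = b ^ n"
  have "e \<le> c * N"
    using assms(2) mult_le_mono1[OF c(2), of N] unfolding N_def by linarith
  then have "(N + 1) * e \<le> (N + 1) * (c * N)"
    by (rule mult_le_mono2)
  then have "(N + 1) * (b * e) \<le> N * (c * (e + (N + 1))) + c * e"
    using c by (simp add: algebra_simps)
  moreover have "N * (c * (e + (N + 1))) \<le> N * (c * e')"
    using assms(3) by (intro mult_le_mono2) (simp add: N_def)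
  moreover have "SC_apery b n e + c * e = (N + 1) * apery_coeff b e"
    using SC_apery_add[OF assms(1), of n e] c by (simp add: N_def)
  moreover have "\<dots> \<le> (N + 1) * (b * e)"
    by (intro mult_le_mono2 apery_coeff_le_mult[OF assms(1)])
  ultimately have "SC_apery b n e \<le> N * (c * e')"
    by linarith
  then show ?thesis
    using c by (simp add: N_def)
qed

lemma SC_apery_least:
  assumes "even b" "b \<ge> 2" "e \<le> b ^ n" "y \<in> SCplus b n"
    and "[y = SC_apery b n e] (mod (b ^ n + 1))"
  shows "SC_apery b n e \<le> y"
proof -
  obtain A k where y: "y = b ^ n * A + k" and A: "digit_sum b A \<le> k" "k \<le> A" "[k = A] (mod (b - 1))"
    using SCplus_decomp[OF assms(4,2)] by blast
  obtain e' where e': "A - k = (b - 1) * e'"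
    using A(2,3) by (metis cong_altdef_nat cong_sym dvdE)
  have y_shape: "y + (b - 1) * e' = (b ^ n + 1) * A"
    using y A(2) e' by (simp add: algebra_simps flip: e')
  then have "[e' = e] (mod (b ^ n + 1))"
    using cong_shape_imp_cong[OF assms(1,2) _ SC_apery_add[OF assms(2)] assms(5)] by blast
  then obtain t where t: "e' = e + (b ^ n + 1) * t"
    using assms(3) by (metis cong_def le_imp_less_Suc mod_less mod_mult_div_eq add.commute Suc_eq_plus1)
  show ?thesis
  proof (cases "t = 0")
    case True
    then have "apery_coeff b e \<le> A"
      using A e' t by (intro apery_coeff_le) simp
    then show ?thesis
      using SC_apery_add[OF assms(2), of n e] y_shape t True
      by (metis add_le_cancel_right add_0_right mult_0_right mult_le_mono2)
  next
    case False
    then have "(b ^ n + 1) * 1 \<le> (b ^ n + 1) * t"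
      by (intro mult_le_mono2) simp
    then have "SC_apery b n e \<le> b ^ n * ((b - 1) * e')"
      using t by (intro SC_apery_le_power_mult[OF assms(2,3)]) simp
    also have "\<dots> \<le> y"
      unfolding y e'[symmetric] by (intro trans_le_add1 mult_le_mono2 diff_le_self)
    finally show ?thesis .
  qed
qed

lemma bij_betw_SC_apery_mod:
  assumes "even b" "b \<ge> 2"
  shows "bij_betw (\<lambda>e. SC_apery b n e mod (b ^ n + 1)) {..b ^ n} {..<b ^ n + 1}"
proof -
  have inj: "inj_on (\<lambda>e. SC_apery b n e mod (b ^ n + 1)) {..b ^ n}"
    using SC_apery_cong_imp_eq[OF assms] by (auto intro!: inj_onI simp: cong_def)
  then have "(\<lambda>e. SC_apery b n e mod (b ^ n + 1)) ` {..b ^ n} = {..<b ^ n + 1}"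
    by (intro card_subset_eq) (auto simp: card_image)
  with inj show ?thesis
    by (simp add: bij_betw_def)
qed

lemma genus_SCplus_apery_coeff:
  assumes "even b" "b \<ge> 2"
  shows "2 * genus (SCplus b n) + b * b ^ n = 2 * (\<Sum>e\<le>b ^ n. apery_coeff b e)"
proof -
  define N where "N = b ^ n"
  have "(N + 1) * genus (SCplus b n) + (\<Sum>r<N + 1. r) = (\<Sum>e\<le>N. SC_apery b n e)"
    unfolding genus_def N_def
  proof (rule card_gaps_Apery[OF _ bij_betw_SC_apery_mod[OF assms]])
    fix x assume "x \<in> SCplus b n"
    then show "x + (b ^ n + 1) \<in> SCplus b n"
      using SCplus_add mult_generator_in_SCplus[of 1 b n 0] by (metis add_0_right mult_1)
  qed (use assms in \<open>auto intro: SC_apery_in_SCplus SC_apery_least\<close>)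
  moreover have "(\<Sum>e\<le>N. SC_apery b n e) + (b - 1) * (\<Sum>e\<le>N. e) = (N + 1) * (\<Sum>e\<le>N. apery_coeff b e)"
    using SC_apery_add[OF assms(2)] by (simp add: N_def sum_distrib_left flip: sum.distrib)
  moreover have "(b - 1) * (\<Sum>e\<le>N. e) + (\<Sum>e\<le>N. e) = b * (\<Sum>e\<le>N. e)"
    using assms(2) by (simp add: diff_mult_distrib)
  moreover have "b * (2 * (\<Sum>e\<le>N. e)) = b * (N * (N + 1))"
    using double_sum_lessThan[of "N + 1"] by (simp add: lessThan_Suc_atMost)
  ultimately have "(N + 1) * (2 * genus (SCplus b n) + b * N) = (N + 1) * (2 * (\<Sum>e\<le>N. apery_coeff b e))"
    by (simp add: lessThan_Suc_atMost algebra_simps)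
  then show ?thesis
    unfolding mult_cancel1 N_def by simp
qed

section \<open>Summing the Apery coefficients\<close>

lemma sum_apery_coeff:
  fixes b N :: nat
  assumes b: "b \<ge> 2"
  defines "X \<equiv> apery_coeff b N"
  shows "(b - 1) * (\<Sum>e\<le>N. apery_coeff b e) + (\<Sum>x<X. x - digit_sum b x) = X * ((b - 1) * N)"
proof -
  let ?g = "\<lambda>x. x - digit_sum b x"
  have count: "apery_coeff b e = (\<Sum>x<X. of_bool (?g x < (b - 1) * e))" if "e \<le> N" for e
  proof -
    have below: "{x. ?g x < (b - 1) * e} = {..<apery_coeff b e}"
      by (simp add: set_eq_iff less_apery_coeff_iff[OF b])
    have "apery_coeff b e \<le> X"
      using apery_coeff_mono[OF b that] by (simp add: X_def)
    then have "{..<X} \<inter> {x. ?g x < (b - 1) * e} = {..<apery_coeff b e}"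
      unfolding below by auto
    then show ?thesis
      by simp
  qed
  have count_dual: "(b - 1) * (\<Sum>e\<le>N. of_bool (?g x < (b - 1) * e)) = (b - 1) * N - ?g x"
    if "x < X" for x
  proof -
    have "(b - 1) dvd ?g x"
      using cong_digit_sum[OF b, of x] digit_sum_le[OF b, of x] by (simp add: cong_altdef_nat cong_sym_eq)
    then obtain phi where phi: "?g x = (b - 1) * phi"
      by (elim dvdE)
    have "phi < N"
      using that less_apery_coeff_iff[OF b, of x N] by (simp add: X_def phi)
    have "{..N} \<inter> {e. ?g x < (b - 1) * e} = {phi<..N}"
      using b by (auto simp: phi)
    then show ?thesis
      using phi \<open>phi < N\<close> by (simp add: diff_mult_distrib2)
  qed
  have "(\<Sum>e\<le>N. apery_coeff b e) = (\<Sum>e\<le>N. \<Sum>x<X. of_bool (?g x < (b - 1) * e))"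
    using count by (intro sum.cong) simp_all
  also have "\<dots> = (\<Sum>x<X. \<Sum>e\<le>N. of_bool (?g x < (b - 1) * e))"
    by (rule sum.swap)
  finally have "(b - 1) * (\<Sum>e\<le>N. apery_coeff b e) = (\<Sum>x<X. (b - 1) * (\<Sum>e\<le>N. of_bool (?g x < (b - 1) * e)))"
    by (simp only: sum_distrib_left)
  also have "\<dots> = (\<Sum>x<X. (b - 1) * N - ?g x)"
    by (rule sum.cong[OF refl], rule count_dual) simp
  finally have "(b - 1) * (\<Sum>e\<le>N. apery_coeff b e) + (\<Sum>x<X. ?g x)
      = (\<Sum>x<X. (b - 1) * N - ?g x + ?g x)"
    by (simp add: sum.distrib)
  also have "\<dots> = (\<Sum>x<X. (b - 1) * N)"
    using less_apery_coeff_iff[OF b] by (intro sum.cong) (simp_all add: X_def)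
  finally show ?thesis
    by simp
qed

lemma apery_coeff_power:
  assumes b: "b \<ge> 2" and n: "n \<ge> 2"
  shows "apery_coeff b (b ^ n) = (b - 1) * b ^ n + b"
proof -
  obtain k where k: "n = Suc (Suc k)"
    using n by (metis add_2_eq_Suc le_Suc_ex)
  define X where "X = (b - 1) * b ^ n + b"
  have "X = b * (b * (b ^ k * (b - 1)) + 1)"
    by (simp add: X_def k algebra_simps)
  then have "digit_sum b X = digit_sum b (b * (b ^ k * (b - 1)) + 1)"
    using digit_sum_mult[OF b] by presburger
  also have "\<dots> = digit_sum b (b ^ k * (b - 1)) + 1"
    by (rule digit_sum_mult_add[OF b]) (use b in simp)
  also have "\<dots> = b"
    using b by (simp add: digit_sum_power_mult digit_sum_less)
  finally have "digit_sum b X = b" .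
  then have le: "apery_coeff b (b ^ n) \<le> X"
    by (intro apery_coeff_le) (simp add: X_def)
  have X1: "X - 1 = b * (b ^ Suc k * (b - 1)) + (b - 1)"
    using b by (simp add: X_def k algebra_simps)
  have "digit_sum b (X - 1) = digit_sum b (b ^ Suc k * (b - 1)) + (b - 1)"
    unfolding X1 by (rule digit_sum_mult_add[OF b]) (use b in simp)
  also have "\<dots> = 2 * (b - 1)"
    using b by (simp add: digit_sum_power_mult digit_sum_less del: power_Suc)
  finally have "digit_sum b (X - 1) = 2 * (b - 1)" .
  moreover have "b - 1 \<le> (b - 1) * b ^ n" and "X - 1 = (b - 1) * b ^ n + (b - 1)"
    using b by (simp_all add: X_def)
  ultimately have "X - 1 < apery_coeff b (b ^ n)"
    using b unfolding less_apery_coeff_iff[OF b] by linarith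
  with le show ?thesis
    by (simp add: X_def)
qed

lemma double_sum_digit_sum_lessThan_pred_power_add:
  assumes b: "b \<ge> 2" and n: "n \<ge> 1"
  shows "2 * (\<Sum>x<(b - 1) * b ^ n + b. digit_sum b x)
    = b ^ n * (b - 1) * (b - 2) + n * (b - 1) * (b - 1) * b ^ n + 3 * b * (b - 1)"
proof -
  have top: "digit_sum b ((b - 1) * b ^ n + r) = (b - 1) + r" if "r < b" for r
  proof -
    have "(b - 1) * b ^ n + r = b * (b ^ (n - 1) * (b - 1)) + r"
      using n by (cases n) (simp_all add: algebra_simps)
    then have "digit_sum b ((b - 1) * b ^ n + r) = digit_sum b (b ^ (n - 1) * (b - 1)) + r"
      using digit_sum_mult_add[OF b that] by presburger
    then show ?thesis
      using b by (simp add: digit_sum_power_mult digit_sum_less)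
  qed
  define S R where "S = (\<Sum>x<(b - 1) * b ^ n. digit_sum b x)" and "R = (\<Sum>r<b. r)"
  have "(\<Sum>x<(b - 1) * b ^ n + b. digit_sum b x) = S + (\<Sum>r<b. (b - 1) + r)"
    using top by (simp add: sum_lessThan_add S_def)
  also have "(\<Sum>r<b. (b - 1) + r) = b * (b - 1) + R"
    unfolding sum.distrib R_def by simp
  finally have sum_eq: "(\<Sum>x<(b - 1) * b ^ n + b. digit_sum b x) = S + (b * (b - 1) + R)" .
  have "2 * S = b ^ n * (b - 1) * (b - 1 - 1) + n * (b - 1) * (b - 1) * b ^ n"
    unfolding S_def by (rule double_sum_digit_sum_mult_power[OF b]) simp
  moreover have "2 * R = b * (b - 1)"
    unfolding R_def by (rule double_sum_lessThan)
  moreover obtain d where "b = d + 2"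
    using le_Suc_ex[OF b] by (auto simp: add.commute)
  ultimately show ?thesis
    unfolding sum_eq by (simp add: algebra_simps)
qed

lemma double_sum_apery_coeff_power:
  assumes b: "b \<ge> 2" and n: "n \<ge> 2"
  shows "2 * (\<Sum>e\<le>b ^ n. apery_coeff b e) = (b - 1) * b ^ (2 * n) + (b - 1) * (n + 1) * b ^ n + 2 * b"
proof -
  define N X where "N = b ^ n" and "X = (b - 1) * b ^ n + b"
  define P G D where "P = (\<Sum>e\<le>N. apery_coeff b e)" and "G = (\<Sum>x<X. x - digit_sum b x)"
    and "D = (\<Sum>x<X. digit_sum b x)"
  obtain d where d: "b = d + 2"
    using le_Suc_ex[OF b] by (auto simp: add.commute)
  have "(b - 1) * P + G = X * ((b - 1) * N)"
    using sum_apery_coeff[OF b, of N] apery_coeff_power[OF b n] by (simp add: P_def G_def N_def X_def)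
  moreover have "2 * (G + D) = X * (X - 1)"
    using digit_sum_le[OF b] double_sum_lessThan[of X] by (simp add: G_def D_def flip: sum.distrib)
  moreover have "2 * D = N * (b - 1) * (b - 2) + n * (b - 1) * (b - 1) * N + 3 * b * (b - 1)"
    using double_sum_digit_sum_lessThan_pred_power_add[OF b, of n] n by (simp add: D_def N_def X_def)
  ultimately have "(d + 1) * (2 * P) = (d + 1) * ((d + 1) * N ^ 2 + (d + 1) * (n + 1) * N + 2 * (d + 2))"
    by (simp add: X_def N_def d power2_eq_square algebra_simps)
  then have "2 * P = (d + 1) * N ^ 2 + (d + 1) * (n + 1) * N + 2 * (d + 2)"
    unfolding mult_cancel1 by simp
  then show ?thesis
    unfolding power_even_eq N_def[symmetric] P_def[symmetric] by (simp add: d)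
qed

theorem mainTheorem18:
  fixes b n :: nat
  assumes "even b" and "b \<ge> 2" and "n \<ge> 2"
  shows "real (genus (SCplus b n)) =
    real b + (real b ^ (2 * n) * (real b - 1) + real b ^ n * (real b * real n - real n - 1)) / 2"
proof -
  have "2 * genus (SCplus b n) + b * b ^ n = (b - 1) * b ^ (2 * n) + (b - 1) * (n + 1) * b ^ n + 2 * b"
    using genus_SCplus_apery_coeff[OF assms(1,2)] double_sum_apery_coeff_power[OF assms(2,3)]
    by simp
  then have "real (2 * genus (SCplus b n) + b * b ^ n)
      = real ((b - 1) * b ^ (2 * n) + (b - 1) * (n + 1) * b ^ n + 2 * b)"
    by (rule arg_cong)
  then have "2 * real (genus (SCplus b n)) + real b * real b ^ n
      = (real b - 1) * real b ^ (2 * n) + (real b - 1) * (real n + 1) * real b ^ n + 2 * real b"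
    using assms(2) by (simp add: of_nat_diff) (simp add: algebra_simps)
  then show ?thesis
    by (simp add: field_simps)
qed

end
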